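(* Fix $I_{12},I_{23},I_{31}\in[0,\infty)$. For $(u_1,u_2,u_3)\in\mathcal{U}_H^{123}$, let $\alpha_1,\alpha_2,\alpha_3$ be the inner angles, opposite to sides $l_1,l_2,l_3$ respectively, of the hyperbolic triangle with side lengths $l_1,l_2,l_3$. Then the Jacobian matrix $\left(\partial\alpha_i/\partial u_j\right)_{i,j=1}^3$ is negative definite at every point of $\mathcal{U}_H^{123}$.
   Context: Put $u_i=\ln\tanh(r_i/2)$ with $r_i>0$ for $i=1,2,3$. Let $l_1,l_2,l_3>0$ be given by $$\cosh l_1=\cosh r_2\cosh r_3+I_{23}\sinh r_2\sinh r_3,$$ $$\cosh l_2=\cosh r_3\cosh r_1+I_{31}\sinh r_3\sinh r_1,$$ $$\cosh l_3=\cosh r_1\cosh r_2+I_{12}\sinh r_1\sinh r_2.$$ The set $\mathcal{U}_H^{123}\subset(-\infty,0)^3$ is the set of $(u_1,u_2,u_3)$ for which $l_1,l_2,l_3$ satisfy the strict triangle inequalities. The Jacobian matrix $\left(\partial\alpha_i/\partial u_j\right)$ is symmetric. *)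

theory Defs
  imports "HOL-Analysis.Analysis"
begin

text \<open>Radius from the coordinate u = ln tanh(r/2), i.e. r = 2 artanh(e^u) (for u < 0).\<close>
definition radius :: "real \<Rightarrow> real" where
  "radius u = 2 * artanh (exp u)"

definition side_len :: "real \<Rightarrow> real \<Rightarrow> real \<Rightarrow> real" where
  "side_len I ra rb = arcosh (cosh ra * cosh rb + I * sinh ra * sinh rb)"

definition lengths :: "real \<Rightarrow> real \<Rightarrow> real \<Rightarrow> real^3 \<Rightarrow> real^3" where
  "lengths I12 I23 I31 u =
     vector [side_len I23 (radius (u$2)) (radius (u$3)),
             side_len I31 (radius (u$3)) (radius (u$1)),
             side_len I12 (radius (u$1)) (radius (u$2))]"

text \<open>Inner angle opposite to side a in the hyperbolic triangle with sides a, b, c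
  (hyperbolic law of cosines).\<close>
definition hyp_angle :: "real \<Rightarrow> real \<Rightarrow> real \<Rightarrow> real" where
  "hyp_angle a b c = arccos ((cosh b * cosh c - cosh a) / (sinh b * sinh c))"

definition angles :: "real \<Rightarrow> real \<Rightarrow> real \<Rightarrow> real^3 \<Rightarrow> real^3" where
  "angles I12 I23 I31 u =
     (let l = lengths I12 I23 I31 u in
       vector [hyp_angle (l$1) (l$2) (l$3),
               hyp_angle (l$2) (l$3) (l$1),
               hyp_angle (l$3) (l$1) (l$2)])"

definition U_H :: "real \<Rightarrow> real \<Rightarrow> real \<Rightarrow> (real^3) set" where
  "U_H I12 I23 I31 = {u. u$1 < 0 \<and> u$2 < 0 \<and> u$3 < 0 \<and>
     (let l = lengths I12 I23 I31 u in
        l$1 < l$2 + l$3 \<and> l$2 < l$3 + l$1 \<and> l$3 < l$1 + l$2)}"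

definition neg_definite :: "real^'n^'n \<Rightarrow> bool" where
  "neg_definite A \<longleftrightarrow> (\<forall>x. x \<noteq> 0 \<longrightarrow> x \<bullet> (A *v x) < 0)"

end

theory Submission
  imports Defs
begin

text \<open>
  For \<open>u \<in> U_H\<close> write \<open>r\<^sub>i = radius u\<^sub>i\<close>, \<open>c\<^sub>i = cosh r\<^sub>i\<close>, let \<open>l\<^sub>i\<close> be the
  side lengths and \<open>L\<^sub>i = cosh l\<^sub>i\<close>.  The Jacobian factors by the chain rule as
  \<open>d\<alpha>/du = (d\<alpha>/dl) (dl/du)\<close>:

  \<^item> \<open>dl\<^sub>i/du\<^sub>j = K\<^sub>i\<^sub>j / sinh l\<^sub>i\<close> for \<open>i \<noteq> j\<close>, with \<open>K\<^sub>i\<^sub>j = L\<^sub>i c\<^sub>j - c\<^sub>k\<close> (\<open>k\<close> the third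
    index), and \<open>dl\<^sub>i/du\<^sub>i = 0\<close>; every \<open>K\<^sub>i\<^sub>j\<close> is positive;
  \<^item> \<open>d\<alpha>\<^sub>i/dl\<^sub>j = M\<^sub>i\<^sub>j / (sinh l\<^sub>j sqrt \<Delta>)\<close>, where \<open>\<Delta> > 0\<close> is the determinant of the
    Gram matrix \<open>C = [[1,L\<^sub>3,L\<^sub>2],[L\<^sub>3,1,L\<^sub>1],[L\<^sub>2,L\<^sub>1,1]]\<close> and \<open>M = -adj C\<close>.

  Hence \<open>x\<^sup>T J x = -(1/sqrt \<Delta>) y\<^sup>T Q y / \<Delta>\<close> with \<open>y = M x\<close> and
  \<open>Q = diag(1/sinh\<^sup>2 l\<^sub>i) K C\<close>, a symmetric matrix with off-diagonal entries \<open>c\<^sub>k\<close>.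
  Negative definiteness of \<open>J\<close> thus reduces to positive definiteness of \<open>Q\<close>, which we
  obtain from Sylvester's criterion: \<open>det Q = det K det C / \<Pi>(L\<^sub>i\<^sup>2 - 1) > 0\<close>, the
  diagonal is positive, and since at most one angle of the triangle is obtuse some
  principal \<open>2\<times>2\<close> minor is positive.
\<close>

text \<open>The proof
  writes \<open>d1 m Q\<close> as a sum of squares (\<open>m\<close> the \<open>2\<times>2\<close> minor).\<close>
lemma sylvester_3:
  fixes d1 d2 d3 f1 f2 f3 y1 y2 y3 :: real
  assumes d1: "d1 > 0" and minor: "d1*d2 - f3^2 > 0"
    and det: "d1*d2*d3 + 2*f1*f2*f3 - d1*f1^2 - d2*f2^2 - d3*f3^2 > 0"
    and y: "y1 \<noteq> 0 \<or> y2 \<noteq> 0 \<or> y3 \<noteq> 0"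
  shows "d1*y1^2 + d2*y2^2 + d3*y3^2 + 2*f3*y1*y2 + 2*f2*y1*y3 + 2*f1*y2*y3 > 0"
proof -
  define m where "m = d1*d2 - f3^2"
  define \<Delta> where "\<Delta> = d1*d2*d3 + 2*f1*f2*f3 - d1*f1^2 - d2*f2^2 - d3*f3^2"
  define Q where "Q = d1*y1^2 + d2*y2^2 + d3*y3^2 + 2*f3*y1*y2 + 2*f2*y1*y3 + 2*f1*y2*y3"
  have squares: "d1*m*Q = m*(d1*y1 + f3*y2 + f2*y3)^2 + (m*y2 + (d1*f1 - f2*f3)*y3)^2 + d1*\<Delta>*y3^2"
    unfolding m_def \<Delta>_def Q_def by (simp add: power2_eq_square algebra_simps)
  have m: "m > 0" and \<Delta>: "\<Delta> > 0" using minor det by (simp_all add: m_def \<Delta>_def)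
  have "d1*m*Q > 0"
  proof (cases "y3 = 0")
    case False
    then have "d1*\<Delta>*y3^2 > 0" using d1 \<Delta> by simp
    then show ?thesis unfolding squares using m by (smt (verit) mult_nonneg_nonneg zero_le_power2)
  next
    case y3: True
    show ?thesis
    proof (cases "y2 = 0")
      case False
      then have "(m*y2 + (d1*f1 - f2*f3)*y3)^2 > 0" using y3 m by simp
      then show ?thesis unfolding squares using m d1 \<Delta>
        by (smt (verit) mult_nonneg_nonneg zero_le_power2)
    next
      case True
      then have "m*(d1*y1 + f3*y2 + f2*y3)^2 > 0" using y y3 m d1 by simp
      then show ?thesis unfolding squares using m d1 \<Delta>
        by (smt (verit) mult_nonneg_nonneg zero_le_power2)
    qed
  qed
  then show ?thesis using d1 m unfolding Q_def by (metis mult_pos_pos zero_less_mult_pos)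
qed

lemma sylvester_3_cyclic:
  fixes d1 d2 d3 f1 f2 f3 y1 y2 y3 :: real
  assumes d: "d1 > 0" "d2 > 0" "d3 > 0"
    and det: "d1*d2*d3 + 2*f1*f2*f3 - d1*f1^2 - d2*f2^2 - d3*f3^2 > 0"
    and minor: "d1*d2 - f3^2 > 0 \<or> d2*d3 - f1^2 > 0 \<or> d3*d1 - f2^2 > 0"
    and y: "y1 \<noteq> 0 \<or> y2 \<noteq> 0 \<or> y3 \<noteq> 0"
  shows "d1*y1^2 + d2*y2^2 + d3*y3^2 + 2*f3*y1*y2 + 2*f2*y1*y3 + 2*f1*y2*y3 > 0"
  using minor
proof (elim disjE)
  assume "d1*d2 - f3^2 > 0"
  then show ?thesis using sylvester_3 d det y by blast
next
  assume "d2*d3 - f1^2 > 0"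
  moreover have "d2*d3*d1 + 2*f2*f3*f1 - d2*f2^2 - d3*f3^2 - d1*f1^2 > 0"
    using det by (simp add: algebra_simps)
  moreover have "y2 \<noteq> 0 \<or> y3 \<noteq> 0 \<or> y1 \<noteq> 0" using y by blast
  ultimately show ?thesis
    using sylvester_3[of d2 d3 f1 d1 f2 f3 y2 y3 y1] d(2) by (simp add: algebra_simps)
next
  assume "d3*d1 - f2^2 > 0"
  moreover have "d3*d1*d2 + 2*f3*f1*f2 - d3*f3^2 - d1*f1^2 - d2*f2^2 > 0"
    using det by (simp add: algebra_simps)
  moreover have "y3 \<noteq> 0 \<or> y1 \<noteq> 0 \<or> y2 \<noteq> 0" using y by blast
  ultimately show ?thesis
    using sylvester_3[of d3 d1 f2 d2 f3 f1 y3 y1 y2] d(3) by (simp add: algebra_simps)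
qed

text \<open>Determinant of the Gram matrix \<open>[[1,L3,L2],[L3,1,L1],[L2,L1,1]]\<close>.\<close>
definition gram_det :: "real \<Rightarrow> real \<Rightarrow> real \<Rightarrow> real" where
  "gram_det L1 L2 L3 = 1 + 2*L1*L2*L3 - L1^2 - L2^2 - L3^2"

lemma gram_det_cyclic:
  "gram_det L2 L3 L1 = gram_det L1 L2 L3" "gram_det L3 L1 L2 = gram_det L1 L2 L3"
  by (simp_all add: gram_det_def algebra_simps)

text \<open>For side lengths of a nondegenerate triangle the Gram determinant of their
  hyperbolic cosines is positive: it factors as \<open>(cosh(b+c) - cosh a)(cosh a - cosh(b-c))\<close>.\<close>
lemma gram_det_triangle_pos:
  fixes a b c :: real
  assumes "a \<ge> 0" "b \<ge> 0" "c \<ge> 0" "a < b + c" "b < c + a" "c < a + b"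
  shows "gram_det (cosh a) (cosh b) (cosh c) > 0"
proof -
  have "gram_det (cosh a) (cosh b) (cosh c) = (cosh (b + c) - cosh a) * (cosh a - cosh (b - c))"
  proof -
    have "(cosh (b + c) - cosh a) * (cosh a - cosh (b - c))
        = (sinh b * sinh c)^2 - (cosh a - cosh b * cosh c)^2"
      unfolding cosh_add cosh_diff by (simp add: algebra_simps power2_eq_square)
    also have "\<dots> = ((cosh b)^2 - 1) * ((cosh c)^2 - 1) - (cosh a - cosh b * cosh c)^2"
      by (simp add: power_mult_distrib cosh_square_eq)
    finally show ?thesis by (simp add: gram_det_def algebra_simps power2_eq_square)
  qed
  moreover have "cosh a < cosh (b + c)" using assms by (simp add: cosh_real_nonneg_less_iff)
  moreover have "cosh (b - c) < cosh a"
  proof -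
    have "cosh \<bar>b - c\<bar> < cosh a" using assms by (subst cosh_real_nonneg_less_iff) auto
    then show ?thesis by simp
  qed
  ultimately show ?thesis by simp
qed

text \<open>If \<open>a, b > 1\<close> and \<open>ab < c\<close> then \<open>b < ac\<close>: two of the products \<open>L\<^sub>iL\<^sub>j - L\<^sub>k\<close> cannot
  both be negative.\<close>
lemma product_bound:
  fixes a b c :: real
  assumes "a > 1" "b > 1" "a*b < c"
  shows "b < a*c"
proof -
  have "a*b > 0" using assms by simp
  then have "c > 0" using assms(3) by linarith
  have "1*b < a*b" by (rule mult_strict_right_mono) (use assms in auto)
  also have "\<dots> < c" by (fact assms(3))
  also have "1*c < a*c" by (rule mult_strict_right_mono) (use assms \<open>c > 0\<close> in auto)
  finally show ?thesis by simp
qed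

text \<open>At most one of the quantities \<open>L\<^sub>iL\<^sub>j - L\<^sub>k\<close> (proportional to the cosine of an angle)
  is negative, i.e.\ a triangle has at most one obtuse angle.\<close>
lemma at_most_one_obtuse:
  fixes L1 L2 L3 :: real
  assumes "L1 > 1" "L2 > 1" "L3 > 1"
  shows "(L2 \<le> L1*L3 \<and> L1 \<le> L2*L3) \<or> (L3 \<le> L1*L2 \<and> L2 \<le> L1*L3)
       \<or> (L3 \<le> L1*L2 \<and> L1 \<le> L2*L3)"
  using product_bound[of L1 L2 L3] product_bound[of L1 L3 L2] product_bound[of L2 L1 L3]
    product_bound[of L2 L3 L1] product_bound[of L3 L1 L2] product_bound[of L3 L2 L1] assms
  by (auto simp: mult.commute not_le)

text \<open>Diagonal entry of \<open>Q = diag(1/(L\<^sub>i\<^sup>2-1)) K C\<close>; its off-diagonal entries are just \<open>c\<^sub>k\<close>.\<close>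
definition form_diag :: "real \<Rightarrow> real \<Rightarrow> real \<Rightarrow> real \<Rightarrow> real \<Rightarrow> real" where
  "form_diag Li Lj Lk cj ck = ((Li*cj - ck)*Lk + (Li*ck - cj)*Lj) / (Li^2 - 1)"

lemma form_diag_pos:
  assumes "Li > 1" "Lj > 0" "Lk > 0" "Li*cj - ck > 0" "Li*ck - cj > 0"
  shows "form_diag Li Lj Lk cj ck > 0"
proof -
  have "Li^2 > 1" using assms(1) by (simp add: one_less_power)
  then show ?thesis unfolding form_diag_def using assms by (simp add: add_pos_pos)
qed

text \<open>\<open>det Q\<close> equals \<open>det K \<cdot> det C\<close> divided by \<open>\<Pi>(L\<^sub>i\<^sup>2-1)\<close>, where \<open>K\<close> has zero diagonal.\<close>
lemma form_det:
  fixes L1 L2 L3 c1 c2 c3 :: real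
  assumes "L1^2 \<noteq> 1" "L2^2 \<noteq> 1" "L3^2 \<noteq> 1"
  defines "d1 \<equiv> form_diag L1 L2 L3 c2 c3" and "d2 \<equiv> form_diag L2 L3 L1 c3 c1"
    and "d3 \<equiv> form_diag L3 L1 L2 c1 c2"
  shows "(L1^2-1)*(L2^2-1)*(L3^2-1) * (d1*d2*d3 + 2*c1*c2*c3 - d1*c1^2 - d2*c2^2 - d3*c3^2)
    = ((L1*c2 - c3)*(L2*c3 - c1)*(L3*c1 - c2) + (L1*c3 - c2)*(L3*c2 - c1)*(L2*c1 - c3))
      * gram_det L1 L2 L3"
proof -
  have d: "(L1^2-1)*d1 = (L1*c2 - c3)*L3 + (L1*c3 - c2)*L2"
          "(L2^2-1)*d2 = (L2*c3 - c1)*L1 + (L2*c1 - c3)*L3"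
          "(L3^2-1)*d3 = (L3*c1 - c2)*L2 + (L3*c2 - c1)*L1"
    using assms(1-3) unfolding d1_def d2_def d3_def form_diag_def by simp_all
  have "(L1^2-1)*(L2^2-1)*(L3^2-1) * (d1*d2*d3 + 2*c1*c2*c3 - d1*c1^2 - d2*c2^2 - d3*c3^2)
     = ((L1^2-1)*d1)*((L2^2-1)*d2)*((L3^2-1)*d3) + (L1^2-1)*(L2^2-1)*(L3^2-1)*2*c1*c2*c3
       - ((L1^2-1)*d1)*(L2^2-1)*(L3^2-1)*c1^2 - ((L2^2-1)*d2)*(L1^2-1)*(L3^2-1)*c2^2
       - ((L3^2-1)*d3)*(L1^2-1)*(L2^2-1)*c3^2"
    by (simp add: algebra_simps)
  also have "\<dots> = ((L1*c2 - c3)*(L2*c3 - c1)*(L3*c1 - c2) + (L1*c3 - c2)*(L3*c2 - c1)*(L2*c1 - c3))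
      * gram_det L1 L2 L3"
    unfolding d gram_det_def by (simp add: algebra_simps power2_eq_square)
  finally show ?thesis .
qed

text \<open>The principal \<open>2\<times>2\<close> minor of \<open>Q\<close> for indices 1,2 is positive when the angles opposite
  sides 1 and 2 are not obtuse.\<close>
lemma form_minor_pos:
  fixes L1 L2 L3 c1 c2 c3 :: real
  assumes L: "L1 > 1" "L2 > 1" "L3 > 1"
    and K: "L1*c2 - c3 > 0" "L1*c3 - c2 > 0" "L2*c1 - c3 > 0" "L2*c3 - c1 > 0"
    and acute: "L2 \<le> L1*L3" "L1 \<le> L2*L3"
  shows "form_diag L1 L2 L3 c2 c3 * form_diag L2 L3 L1 c3 c1 - c3^2 > 0"
proof -
  have l: "L1^2 - 1 > 0" "L2^2 - 1 > 0" "L3^2 - 1 > 0"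
    using L by (simp_all add: one_less_power)
  have d: "(L1^2-1)*form_diag L1 L2 L3 c2 c3 = (L1*c2 - c3)*L3 + (L1*c3 - c2)*L2"
      "(L2^2-1)*form_diag L2 L3 L1 c3 c1 = (L2*c3 - c1)*L1 + (L2*c1 - c3)*L3"
    using l unfolding form_diag_def by simp_all
  have "(L1^2-1)*(L2^2-1) * (form_diag L1 L2 L3 c2 c3 * form_diag L2 L3 L1 c3 c1 - c3^2)
      = ((L1^2-1)*form_diag L1 L2 L3 c2 c3) * ((L2^2-1)*form_diag L2 L3 L1 c3 c1)
        - (L1^2-1)*(L2^2-1)*c3^2"
    by (simp add: algebra_simps)
  also have "\<dots> = (L1*c2 - c3)*(L2*c1 - c3)*(L3^2-1) + (L1*c2 - c3)*(L2*c3 - c1)*(L1*L3 - L2)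
        + (L1*c3 - c2)*(L2*c1 - c3)*(L2*L3 - L1)"
    unfolding d by (simp add: algebra_simps power2_eq_square)
  finally have "(L1^2-1)*(L2^2-1) * (form_diag L1 L2 L3 c2 c3 * form_diag L2 L3 L1 c3 c1 - c3^2)
      = (L1*c2 - c3)*(L2*c1 - c3)*(L3^2-1) + (L1*c2 - c3)*(L2*c3 - c1)*(L1*L3 - L2)
        + (L1*c3 - c2)*(L2*c1 - c3)*(L2*L3 - L1)" .
  moreover have "(L1*c2 - c3)*(L2*c1 - c3)*(L3^2-1) > 0" using K l by simp
  moreover have "(L1*c2 - c3)*(L2*c3 - c1)*(L1*L3 - L2) \<ge> 0"
    "(L1*c3 - c2)*(L2*c1 - c3)*(L2*L3 - L1) \<ge> 0" using K acute by simp_all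
  ultimately show ?thesis using l by (smt (verit) zero_less_mult_iff)
qed

lemma form_pos_def:
  fixes L1 L2 L3 c1 c2 c3 y1 y2 y3 :: real
  assumes L: "L1 > 1" "L2 > 1" "L3 > 1" and D: "gram_det L1 L2 L3 > 0"
    and K: "L1*c2 - c3 > 0" "L1*c3 - c2 > 0" "L2*c1 - c3 > 0" "L2*c3 - c1 > 0"
      "L3*c1 - c2 > 0" "L3*c2 - c1 > 0"
    and y: "y1 \<noteq> 0 \<or> y2 \<noteq> 0 \<or> y3 \<noteq> 0"
  defines "d1 \<equiv> form_diag L1 L2 L3 c2 c3" and "d2 \<equiv> form_diag L2 L3 L1 c3 c1"
    and "d3 \<equiv> form_diag L3 L1 L2 c1 c2"
  shows "d1*y1^2 + d2*y2^2 + d3*y3^2 + 2*c3*y1*y2 + 2*c2*y1*y3 + 2*c1*y2*y3 > 0"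
proof (rule sylvester_3_cyclic[OF _ _ _ _ _ y])
  show "d1 > 0" "d2 > 0" "d3 > 0"
    unfolding d1_def d2_def d3_def using L K by (auto intro!: form_diag_pos)
  have l: "L1^2 - 1 > 0" "L2^2 - 1 > 0" "L3^2 - 1 > 0"
    using L by (simp_all add: one_less_power)
  have "(L1*c2 - c3)*(L2*c3 - c1)*(L3*c1 - c2) + (L1*c3 - c2)*(L3*c2 - c1)*(L2*c1 - c3) > 0"
    using K by (simp add: add_pos_pos)
  then have "(L1^2-1)*(L2^2-1)*(L3^2-1) * (d1*d2*d3 + 2*c1*c2*c3 - d1*c1^2 - d2*c2^2 - d3*c3^2) > 0"
    using form_det[of L1 L2 L3 c2 c3 c1] l D unfolding d1_def d2_def d3_def by simp
  moreover have "(L1^2-1)*(L2^2-1)*(L3^2-1) > 0" using l by simp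
  ultimately show "d1*d2*d3 + 2*c1*c2*c3 - d1*c1^2 - d2*c2^2 - d3*c3^2 > 0"
    by (rule zero_less_mult_pos)
  show "d1*d2 - c3^2 > 0 \<or> d2*d3 - c1^2 > 0 \<or> d3*d1 - c2^2 > 0"
    using at_most_one_obtuse[OF L] form_minor_pos[of L1 L2 L3 c2 c3 c1]
      form_minor_pos[of L2 L3 L1 c3 c1 c2] form_minor_pos[of L3 L1 L2 c1 c2 c3] L K
    unfolding d1_def d2_def d3_def by (auto simp: mult.commute)
qed

text \<open>One row of the identity \<open>\<Delta> Z = -Q y\<close> where \<open>Z\<^sub>i = (K\<^sub>i\<^sub>jx\<^sub>j + K\<^sub>i\<^sub>kx\<^sub>k)/(L\<^sub>i\<^sup>2-1)\<close> and
  \<open>\<Delta> x = -C y\<close>; the other rows are cyclic relabellings.\<close>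
lemma form_row:
  fixes Li Lj Lk cj ck xj xk yi yj yk D :: real
  assumes "Li^2 \<noteq> 1"
    and xj: "D*xj = -(Lk*yi + yj + Li*yk)" and xk: "D*xk = -(Lj*yi + Li*yj + yk)"
  shows "D*(((Li*cj - ck)*xj + (Li*ck - cj)*xk)/(Li^2-1))
       = -(form_diag Li Lj Lk cj ck * yi + ck*yj + cj*yk)"
proof -
  have "D*(((Li*cj - ck)*xj + (Li*ck - cj)*xk)/(Li^2-1))
      = ((Li*cj - ck)*(D*xj) + (Li*ck - cj)*(D*xk))/(Li^2-1)"
    by (simp add: algebra_simps)
  also have "\<dots> = -(((Li*cj - ck)*Lk + (Li*ck - cj)*Lj)*yi + (Li^2-1)*ck*yj + (Li^2-1)*cj*yk)/(Li^2-1)"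
    unfolding xj xk by (simp add: algebra_simps power2_eq_square)
  also have "\<dots> = -(form_diag Li Lj Lk cj ck * yi + ck*yj + cj*yk)"
    using assms(1) by (simp add: form_diag_def field_simps)
  finally show ?thesis .
qed

text \<open>The algebraic core: with \<open>z = diag(1/(L\<^sub>i\<^sup>2-1)) K x\<close>, the form \<open>x\<^sup>T M z\<close> is negative for
  \<open>x \<noteq> 0\<close>, because \<open>\<Delta> \<cdot> x\<^sup>T M z = -y\<^sup>T Q y\<close> for \<open>y = M x \<noteq> 0\<close>.\<close>
lemma angle_form_neg:
  fixes L1 L2 L3 c1 c2 c3 x1 x2 x3 :: real
  assumes L: "L1 > 1" "L2 > 1" "L3 > 1" and D: "gram_det L1 L2 L3 > 0"
    and K: "L1*c2 - c3 > 0" "L1*c3 - c2 > 0" "L2*c1 - c3 > 0" "L2*c3 - c1 > 0"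
      "L3*c1 - c2 > 0" "L3*c2 - c1 > 0"
    and x: "x1 \<noteq> 0 \<or> x2 \<noteq> 0 \<or> x3 \<noteq> 0"
  defines "z1 \<equiv> ((L1*c2 - c3)*x2 + (L1*c3 - c2)*x3)/(L1^2-1)"
    and "z2 \<equiv> ((L2*c3 - c1)*x3 + (L2*c1 - c3)*x1)/(L2^2-1)"
    and "z3 \<equiv> ((L3*c1 - c2)*x1 + (L3*c2 - c1)*x2)/(L3^2-1)"
  shows "x1*((L1^2-1)*z1 + (L3-L1*L2)*z2 + (L2-L1*L3)*z3)
       + x2*((L3-L1*L2)*z1 + (L2^2-1)*z2 + (L1-L2*L3)*z3)
       + x3*((L2-L1*L3)*z1 + (L1-L2*L3)*z2 + (L3^2-1)*z3) < 0"
proof -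
  define \<Delta> where "\<Delta> = gram_det L1 L2 L3"
  define y1 where "y1 = (L1^2-1)*x1 + (L3-L1*L2)*x2 + (L2-L1*L3)*x3"
  define y2 where "y2 = (L3-L1*L2)*x1 + (L2^2-1)*x2 + (L1-L2*L3)*x3"
  define y3 where "y3 = (L2-L1*L3)*x1 + (L1-L2*L3)*x2 + (L3^2-1)*x3"
  have x_by_y: "\<Delta>*x1 = -(y1 + L3*y2 + L2*y3)" "\<Delta>*x2 = -(L3*y1 + y2 + L1*y3)"
      "\<Delta>*x3 = -(L2*y1 + L1*y2 + y3)"
    unfolding \<Delta>_def gram_det_def y1_def y2_def y3_def by (simp_all add: algebra_simps power2_eq_square)
  have y: "y1 \<noteq> 0 \<or> y2 \<noteq> 0 \<or> y3 \<noteq> 0"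
    using x_by_y x D unfolding \<Delta>_def by auto
  have l: "L1^2 \<noteq> 1" "L2^2 \<noteq> 1" "L3^2 \<noteq> 1" using L by (simp_all add: power2_eq_1_iff)
  have z_by_y: "\<Delta>*z1 = -(form_diag L1 L2 L3 c2 c3 * y1 + c3*y2 + c2*y3)"
      "\<Delta>*z2 = -(form_diag L2 L3 L1 c3 c1 * y2 + c1*y3 + c3*y1)"
      "\<Delta>*z3 = -(form_diag L3 L1 L2 c1 c2 * y3 + c2*y1 + c1*y2)"
    unfolding z1_def z2_def z3_def
    by (rule form_row; use l x_by_y in \<open>simp add: algebra_simps\<close>)+
  have "\<Delta>*(y1*z1 + y2*z2 + y3*z3) = y1*(\<Delta>*z1) + y2*(\<Delta>*z2) + y3*(\<Delta>*z3)"
    by (simp add: algebra_simps)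
  also have "\<dots> = -(form_diag L1 L2 L3 c2 c3*y1^2 + form_diag L2 L3 L1 c3 c1*y2^2
      + form_diag L3 L1 L2 c1 c2*y3^2 + 2*c3*y1*y2 + 2*c2*y1*y3 + 2*c1*y2*y3)"
    unfolding z_by_y by (simp add: algebra_simps power2_eq_square)
  also have "\<dots> < 0" using form_pos_def[OF L D K y] by simp
  finally have "y1*z1 + y2*z2 + y3*z3 < 0" using D unfolding \<Delta>_def by (simp add: mult_less_0_iff)
  moreover have "x1*((L1^2-1)*z1 + (L3-L1*L2)*z2 + (L2-L1*L3)*z3)
       + x2*((L3-L1*L2)*z1 + (L2^2-1)*z2 + (L1-L2*L3)*z3)
       + x3*((L2-L1*L3)*z1 + (L1-L2*L3)*z2 + (L3^2-1)*z3) = y1*z1 + y2*z2 + y3*z3"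
    unfolding y1_def y2_def y3_def by (simp add: algebra_simps)
  ultimately show ?thesis by simp
qed

lemma has_derivative_vec_nth:
  "(g has_derivative g') F \<Longrightarrow> ((\<lambda>x. g x $ i) has_derivative (\<lambda>x. g' x $ i)) F"
  by (rule bounded_linear.has_derivative[OF bounded_linear_vec_nth])

lemma has_derivative_vec_componentwise:
  fixes f :: "'a::real_normed_vector \<Rightarrow> real^'n"
  assumes "\<And>i. ((\<lambda>x. f x $ i) has_derivative (\<lambda>h. f' h $ i)) (at a)"
  shows "(f has_derivative f') (at a)"
proof -
  have "((\<lambda>x. f x \<bullet> b) has_derivative (\<lambda>h. f' h \<bullet> b)) (at a)" if "b \<in> Basis" for b
  proof -
    obtain j where "b = axis j 1" using \<open>b \<in> Basis\<close> unfolding Basis_vec_def by auto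
    then show ?thesis using assms[of j] by (simp add: inner_axis)
  qed
  then show ?thesis using has_derivative_componentwise_within[of f f' a UNIV] by simp
qed

lemma matrix_vector_mult_3:
  fixes M :: "real^3^3"
  shows "(M *v h) $ i = M$i$1 * h$1 + M$i$2 * h$2 + M$i$3 * h$3"
  by (simp add: matrix_vector_mult_def sum_3)

lemma has_derivative_cosh_real:
  "(g has_derivative g') (at x) \<Longrightarrow>
    ((\<lambda>x. cosh (g x)) has_derivative (\<lambda>h. g' h * sinh (g x :: real))) (at x)"
  using DERIV_compose_FDERIV[OF has_field_derivative_cosh[OF DERIV_ident]] by simp

lemma has_derivative_sinh_real:
  "(g has_derivative g') (at x) \<Longrightarrow>
    ((\<lambda>x. sinh (g x)) has_derivative (\<lambda>h. g' h * cosh (g x :: real))) (at x)"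
  using DERIV_compose_FDERIV[OF has_field_derivative_sinh[OF DERIV_ident]] by simp

lemma cosh_gt_1: "x > 0 \<Longrightarrow> cosh x > (1::real)"
  using cosh_real_strict_mono[of 0 x] by simp

lemma sinh_eq_sqrt_cosh:
  assumes "x \<ge> 0"
  shows "sinh x = sqrt ((cosh x)^2 - 1)"
proof -
  have "(cosh x)^2 - 1 = (sinh x)^2" by (simp add: cosh_square_eq)
  then show ?thesis using assms by simp
qed

text \<open>For \<open>L > 1\<close>, \<open>S = sqrt (L\<^sup>2 - 1)\<close> (the \<open>sinh\<close> belonging to \<open>cosh = L\<close>) is nonzero and
  \<open>L\<^sup>2 = 1 + S\<^sup>2\<close>; this is how square roots are eliminated from the Jacobians.\<close>
lemma sqrt_sq_minus_one:
  fixes L :: real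
  assumes "L > 1"
  shows "sqrt (L^2 - 1) \<noteq> 0" "L^2 = 1 + sqrt (L^2 - 1) * sqrt (L^2 - 1)"
proof -
  have "L^2 - 1 > 0" using assms by (simp add: one_less_power)
  then show "sqrt (L^2 - 1) \<noteq> 0" by simp
  from \<open>L^2 - 1 > 0\<close> have "sqrt (L^2 - 1) * sqrt (L^2 - 1) = L^2 - 1" by simp
  then show "L^2 = 1 + sqrt (L^2 - 1) * sqrt (L^2 - 1)" by simp
qed

lemma radius_eq_ln: "radius u = ln ((1 + exp u)/(1 - exp u))"
  by (simp add: radius_def artanh_def)

lemma radius_pos:
  assumes "u < 0" shows "radius u > 0"
proof -
  have "(1 + exp u)/(1 - exp u) > 1" using assms by (simp add: field_simps)
  then show ?thesis by (simp add: radius_eq_ln)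
qed

lemma sinh_radius:
  assumes "u < 0"
  shows "sinh (radius u) = 2*exp u/(1 - (exp u)^2)"
proof -
  define t where "t = exp u"
  have t: "1 - t > 0" "1 + t > 0" using assms by (simp_all add: t_def add_pos_pos)
  have "sinh (radius u) = ((1 + t)/(1 - t) - (1 - t)/(1 + t))/2"
    unfolding radius_eq_ln t_def[symmetric] using t by (simp add: sinh_ln_real)
  also have "\<dots> = 2*t/((1 - t)*(1 + t))"
    using t mult_pos_pos[OF t] by (simp add: field_simps algebra_simps)
  also have "(1 - t)*(1 + t) = 1 - t^2" by (simp add: algebra_simps power2_eq_square)
  finally show ?thesis unfolding t_def .
qed

lemma radius_has_derivative:
  assumes "u < 0"
  shows "(radius has_real_derivative sinh (radius u)) (at u)"
proof -
  have "(artanh has_real_derivative 1 / (1 - (exp u)^2)) (at (exp u))"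
    by (rule artanh_real_has_field_derivative) (use assms in auto)
  then have "((\<lambda>u. 2 * artanh (exp u)) has_real_derivative 2 * (1 / (1 - (exp u)^2) * exp u)) (at u)"
    by (intro DERIV_cmult DERIV_chain2[of artanh] DERIV_exp)
  moreover have "2 * (1 / (1 - (exp u)^2) * exp u) = sinh (radius u)"
    by (simp add: sinh_radius[OF assms])
  ultimately show ?thesis by (simp add: radius_def[abs_def])
qed

lemma has_derivative_radius_nth:
  fixes u :: "real^'n"
  assumes "u$j < 0"
  shows "((\<lambda>v. radius (v$j)) has_derivative (\<lambda>h. h$j * sinh (radius (u$j)))) (at u)"
  using DERIV_compose_FDERIV[OF radius_has_derivative[OF assms]
      has_derivative_vec_nth[OF has_derivative_ident]] .

lemma cosh_side_len:
  assumes "ra > 0" "rb > 0" "I \<ge> 0"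
  shows "cosh (side_len I ra rb) = cosh ra * cosh rb + I * sinh ra * sinh rb"
    and "cosh ra * cosh rb + I * sinh ra * sinh rb > 1"
proof -
  have "cosh ra > 1" "cosh rb > 1" using assms by (simp_all add: cosh_gt_1)
  then have "cosh ra * cosh rb > 1" by (simp add: less_1_mult)
  moreover have "I * sinh ra * sinh rb \<ge> 0" using assms by simp
  ultimately show "cosh ra * cosh rb + I * sinh ra * sinh rb > 1" by linarith
  then show "cosh (side_len I ra rb) = cosh ra * cosh rb + I * sinh ra * sinh rb"
    by (simp add: side_len_def)
qed

lemma side_len_pos:
  assumes "ra > 0" "rb > 0" "I \<ge> 0"
  shows "side_len I ra rb > 0"
  using cosh_side_len(2)[OF assms] by (simp add: side_len_def)

lemma side_len_commute: "side_len I ra rb = side_len I rb ra"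
  by (simp add: side_len_def algebra_simps)

text \<open>The coefficient \<open>K = cosh l cosh r\<^sub>a - cosh r\<^sub>b\<close> equals \<open>sinh r\<^sub>a \<cdot> \<partial>(cosh l)/\<partial>r\<^sub>a\<close>,
  and is positive for \<open>I \<ge> 0\<close>.\<close>
lemma side_coeff:
  assumes "ra > 0" "rb > 0" "I \<ge> 0"
  shows "cosh (side_len I ra rb) * cosh ra - cosh rb
       = sinh ra * (sinh ra * cosh rb + I * cosh ra * sinh rb)"
    and "cosh (side_len I ra rb) * cosh ra - cosh rb > 0"
proof -
  have "cosh ra ^ 2 = sinh ra ^ 2 + 1" by (rule cosh_square_eq)
  then show eq: "cosh (side_len I ra rb) * cosh ra - cosh rb
       = sinh ra * (sinh ra * cosh rb + I * cosh ra * sinh rb)"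
    unfolding cosh_side_len(1)[OF assms] by algebra
  have "cosh rb > 0" by (rule cosh_real_pos)
  then show "cosh (side_len I ra rb) * cosh ra - cosh rb > 0"
    unfolding eq using assms by (simp add: add_pos_nonneg)
qed

text \<open>\<open>\<partial>l/\<partial>u\<^sub>j = K/sinh l\<close>, using \<open>dr/du = sinh r\<close> and \<open>d(arcosh)/dx = 1/sqrt(x\<^sup>2-1)\<close>.\<close>
lemma side_len_has_derivative:
  fixes u :: "real^'n"
  assumes uj: "u$j < 0" and uk: "u$k < 0" and I: "I \<ge> 0"
  defines "L \<equiv> cosh (side_len I (radius (u$j)) (radius (u$k)))"
    and "cj \<equiv> cosh (radius (u$j))" and "ck \<equiv> cosh (radius (u$k))"
  shows "((\<lambda>v. side_len I (radius (v$j)) (radius (v$k))) has_derivative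
          (\<lambda>h. ((L*cj - ck)*h$j + (L*ck - cj)*h$k) / sqrt (L^2 - 1))) (at u)"
proof -
  define g where "g = (\<lambda>v::real^'n. cosh (radius (v$j)) * cosh (radius (v$k))
      + I * sinh (radius (v$j)) * sinh (radius (v$k)))"
  have r: "radius (u$j) > 0" "radius (u$k) > 0" using radius_pos uj uk by auto
  have gu: "g u = L" "L > 1"
    using cosh_side_len[OF r I] unfolding g_def L_def by simp_all
  have coeff: "L*cj - ck = sinh (radius (u$j)) * (sinh (radius (u$j)) * ck + I * cj * sinh (radius (u$k)))"
      "L*ck - cj = sinh (radius (u$k)) * (sinh (radius (u$k)) * cj + I * ck * sinh (radius (u$j)))"
    using side_coeff(1)[OF r I] side_coeff(1)[OF r(2,1) I]
    unfolding L_def cj_def ck_def side_len_commute[of I "radius (u$k)"] by simp_all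
  have "(g has_derivative (\<lambda>h. (L*cj - ck)*h$j + (L*ck - cj)*h$k)) (at u)"
    unfolding coeff unfolding g_def cj_def ck_def
    by (rule has_derivative_eq_rhs, (rule has_derivative_add has_derivative_mult has_derivative_const
          has_derivative_cosh_real has_derivative_sinh_real has_derivative_radius_nth uj uk)+)
      (simp add: fun_eq_iff algebra_simps)
  moreover have "(arcosh has_real_derivative 1 / sqrt (L^2 - 1)) (at (g u))"
    using arcosh_real_has_field_derivative[of L UNIV] gu by simp
  ultimately have "((\<lambda>v. arcosh (g v)) has_derivative
      (\<lambda>h. ((L*cj - ck)*h$j + (L*ck - cj)*h$k) * (1 / sqrt (L^2 - 1)))) (at u)"
    by (rule DERIV_compose_FDERIV[rotated])
  then show ?thesis by (simp add: side_len_def g_def)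
qed

definition length_jac :: "real^3 \<Rightarrow> real^3 \<Rightarrow> real^3^3" where
  "length_jac L c = vector [
     vector [0, (L$1*c$2 - c$3) / sqrt (L$1^2 - 1), (L$1*c$3 - c$2) / sqrt (L$1^2 - 1)],
     vector [(L$2*c$1 - c$3) / sqrt (L$2^2 - 1), 0, (L$2*c$3 - c$1) / sqrt (L$2^2 - 1)],
     vector [(L$3*c$1 - c$2) / sqrt (L$3^2 - 1), (L$3*c$2 - c$1) / sqrt (L$3^2 - 1), 0]]"

lemma lengths_has_derivative:
  assumes I: "I12 \<ge> 0" "I23 \<ge> 0" "I31 \<ge> 0" and u: "u$1 < 0" "u$2 < 0" "u$3 < 0"
  defines "L \<equiv> \<chi> i. cosh (lengths I12 I23 I31 u $ i)" and "c \<equiv> \<chi> i. cosh (radius (u$i))"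
  shows "(lengths I12 I23 I31 has_derivative (\<lambda>h. length_jac L c *v h)) (at u)"
proof (rule has_derivative_vec_componentwise)
  fix i :: 3
  have row1: "((\<lambda>v. lengths I12 I23 I31 v $ 1) has_derivative (\<lambda>h. (length_jac L c *v h) $ 1)) (at u)"
    unfolding lengths_def vector_3
    by (rule has_derivative_eq_rhs[OF side_len_has_derivative[OF u(2,3) I(2)]])
      (simp add: fun_eq_iff length_jac_def matrix_vector_mult_3 L_def c_def lengths_def add_divide_distrib)
  have row2: "((\<lambda>v. lengths I12 I23 I31 v $ 2) has_derivative (\<lambda>h. (length_jac L c *v h) $ 2)) (at u)"
    unfolding lengths_def vector_3
    by (rule has_derivative_eq_rhs[OF side_len_has_derivative[OF u(3,1) I(3)]])
      (simp add: fun_eq_iff length_jac_def matrix_vector_mult_3 L_def c_def lengths_def add_divide_distrib)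
  have row3: "((\<lambda>v. lengths I12 I23 I31 v $ 3) has_derivative (\<lambda>h. (length_jac L c *v h) $ 3)) (at u)"
    unfolding lengths_def vector_3
    by (rule has_derivative_eq_rhs[OF side_len_has_derivative[OF u(1,2) I(1)]])
      (simp add: fun_eq_iff length_jac_def matrix_vector_mult_3 L_def c_def lengths_def add_divide_distrib)
  show "((\<lambda>v. lengths I12 I23 I31 v $ i) has_derivative (\<lambda>h. (length_jac L c *v h) $ i)) (at u)"
    using row1 row2 row3 exhaust_3[of i] by auto
qed

lemma lengths_pos_and_coeffs:
  assumes I: "I12 \<ge> 0" "I23 \<ge> 0" "I31 \<ge> 0" and u: "u$1 < 0" "u$2 < 0" "u$3 < 0"
  defines "l \<equiv> lengths I12 I23 I31 u"
  defines "L \<equiv> \<chi> i. cosh (l$i)" and "c \<equiv> \<chi> i. cosh (radius (u$i))"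
  shows "l$1 > 0" "l$2 > 0" "l$3 > 0"
    and "L$1*c$2 - c$3 > 0" "L$1*c$3 - c$2 > 0" "L$2*c$1 - c$3 > 0" "L$2*c$3 - c$1 > 0"
      "L$3*c$1 - c$2 > 0" "L$3*c$2 - c$1 > 0"
proof -
  have r: "radius (u$1) > 0" "radius (u$2) > 0" "radius (u$3) > 0"
    using u by (simp_all add: radius_pos)
  have l: "l$1 = side_len I23 (radius (u$2)) (radius (u$3))"
      "l$2 = side_len I31 (radius (u$3)) (radius (u$1))"
      "l$3 = side_len I12 (radius (u$1)) (radius (u$2))"
    by (simp_all add: l_def lengths_def)
  show "l$1 > 0" "l$2 > 0" "l$3 > 0" unfolding l using r I by (simp_all add: side_len_pos)
  show "L$1*c$2 - c$3 > 0" "L$1*c$3 - c$2 > 0" "L$2*c$1 - c$3 > 0" "L$2*c$3 - c$1 > 0"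
      "L$3*c$1 - c$2 > 0" "L$3*c$2 - c$1 > 0"
    using side_coeff(2)[OF r(2,3) I(2)] side_coeff(2)[OF r(3,2) I(2)]
      side_coeff(2)[OF r(1,3) I(3)] side_coeff(2)[OF r(3,1) I(3)]
      side_coeff(2)[OF r(1,2) I(1)] side_coeff(2)[OF r(2,1) I(1)]
    by (simp_all add: L_def c_def l side_len_commute)
qed

lemma hyp_angle_has_derivative:
  fixes l :: "real^'n" and i j k :: 'n
  assumes lj: "l$j > 0" and lk: "l$k > 0"
  defines "Ca \<equiv> cosh (l$i)" and "Cb \<equiv> cosh (l$j)" and "Cc \<equiv> cosh (l$k)"
    and "Sa \<equiv> sinh (l$i)" and "Sb \<equiv> sinh (l$j)" and "Sc \<equiv> sinh (l$k)"
  assumes D: "gram_det Ca Cb Cc > 0"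
  shows "((\<lambda>m. hyp_angle (m$i) (m$j) (m$k)) has_derivative
     (\<lambda>h. (Sa*h$i + (Cc - Ca*Cb)/Sb*h$j + (Cb - Ca*Cc)/Sc*h$k) / sqrt (gram_det Ca Cb Cc))) (at l)"
proof -
  define N where "N = (\<lambda>m::real^'n. (cosh (m$j)*cosh (m$k) - cosh (m$i))/(sinh (m$j) * sinh (m$k)))"
  have S: "Sb > 0" "Sc > 0" using lj lk by (simp_all add: Sb_def Sc_def)
  have CS: "Cb^2 = 1 + Sb^2" "Cc^2 = 1 + Sc^2"
    by (simp_all add: Cb_def Sb_def Cc_def Sc_def cosh_square_eq)
  have vi: "((\<lambda>m::real^'n. m$p) has_derivative (\<lambda>h. h$p)) (at l)" for p
    by (rule has_derivative_vec_nth[OF has_derivative_ident])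
  have dN: "(N has_derivative (\<lambda>h. -(Sa*h$i + (Cc - Ca*Cb)/Sb*h$j + (Cb - Ca*Cc)/Sc*h$k)/(Sb*Sc))) (at l)"
    unfolding N_def
  proof (rule has_derivative_eq_rhs, (rule has_derivative_divide has_derivative_diff has_derivative_mult
        has_derivative_cosh_real has_derivative_sinh_real vi)+)
    show "sinh (l$j) * sinh (l$k) \<noteq> 0" using S by (simp add: Sb_def Sc_def)
  qed (rule ext, simp only: Ca_def[symmetric] Cb_def[symmetric] Cc_def[symmetric]
      Sa_def[symmetric] Sb_def[symmetric] Sc_def[symmetric],
      use S in \<open>simp add: field_simps\<close>, use CS in algebra)
  have gram: "(Sb*Sc)^2 - (Cb*Cc - Ca)^2 = gram_det Ca Cb Cc"
    unfolding gram_det_def using CS by algebra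
  have N_sq: "1 - (N l)^2 = gram_det Ca Cb Cc / (Sb*Sc)^2"
    using S unfolding gram[symmetric]
    by (simp add: N_def Ca_def Cb_def Cc_def Sb_def Sc_def field_simps)
  moreover have "gram_det Ca Cb Cc / (Sb*Sc)^2 > 0" using D S by simp
  ultimately have "(N l)^2 < 1" by linarith
  then have range: "-1 < N l" "N l < 1" by (auto simp: abs_square_less_1 abs_less_iff)
  have sqrt_N: "sqrt (1 - (N l)^2) = sqrt (gram_det Ca Cb Cc) / (Sb*Sc)"
    unfolding N_sq using S by (simp add: real_sqrt_divide)
  have arccos_N: "((\<lambda>m. arccos (N m)) has_derivative (\<lambda>h. -(Sa*h$i + (Cc - Ca*Cb)/Sb*h$j + (Cb - Ca*Cc)/Sc*h$k)
      / (Sb*Sc) * inverse (- sqrt (1 - (N l)^2)))) (at l)"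
    by (rule has_derivative_arccos[OF range dN])
  have "(\<lambda>m. hyp_angle (m$i) (m$j) (m$k)) = (\<lambda>m. arccos (N m))"
    by (simp add: hyp_angle_def N_def fun_eq_iff)
  then show ?thesis
    by (simp only:) (rule has_derivative_eq_rhs[OF arccos_N],
        use S D in \<open>simp add: sqrt_N fun_eq_iff field_simps\<close>)
qed

definition angles_of_sides :: "real^3 \<Rightarrow> real^3" where
  "angles_of_sides l = vector [hyp_angle (l$1) (l$2) (l$3), hyp_angle (l$2) (l$3) (l$1),
                               hyp_angle (l$3) (l$1) (l$2)]"

lemma angles_eq: "angles I12 I23 I31 = angles_of_sides \<circ> lengths I12 I23 I31"
  by (simp add: fun_eq_iff angles_def angles_of_sides_def Let_def)

text \<open>\<open>M = -adj C\<close> and the Jacobian \<open>d\<alpha>/dl = M diag(1/sinh l\<^sub>j)/sqrt \<Delta>\<close>.\<close>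
definition gram_adj :: "real^3 \<Rightarrow> real^3^3" where
  "gram_adj L = vector [
     vector [L$1^2 - 1, L$3 - L$1*L$2, L$2 - L$1*L$3],
     vector [L$3 - L$1*L$2, L$2^2 - 1, L$1 - L$2*L$3],
     vector [L$2 - L$1*L$3, L$1 - L$2*L$3, L$3^2 - 1]]"

definition angle_jac :: "real^3 \<Rightarrow> real^3^3" where
  "angle_jac L = (\<chi> i j. gram_adj L $ i $ j / (sqrt (L$j^2 - 1) * sqrt (gram_det (L$1) (L$2) (L$3))))"

lemma angles_of_sides_has_derivative:
  assumes l: "l$1 > 0" "l$2 > 0" "l$3 > 0"
  defines "L \<equiv> \<chi> i. cosh (l$i)"
  assumes D: "gram_det (L$1) (L$2) (L$3) > 0"
  shows "(angles_of_sides has_derivative (\<lambda>h. angle_jac L *v h)) (at l)"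
proof (rule has_derivative_vec_componentwise)
  fix p :: 3
  define S where "S = (\<lambda>i. sqrt (L$i^2 - 1))"
  define sD where "sD = sqrt (gram_det (L$1) (L$2) (L$3))"
  have cosh_l: "cosh (l$i) = L$i" for i by (simp add: L_def)
  have sinh_l: "sinh (l$i) = S i" for i
    using l exhaust_3[of i] by (auto simp: L_def S_def sinh_eq_sqrt_cosh)
  have L_gt: "L$i > 1" for i using l exhaust_3[of i] by (auto simp: L_def cosh_gt_1)
  have S: "S i \<noteq> 0" "(L$i)^2 = 1 + S i * S i" for i
    unfolding S_def by (rule sqrt_sq_minus_one[OF L_gt])+
  have sD: "sD > 0" using D by (simp add: sD_def)
  have aj: "angle_jac L $ i $ j = gram_adj L $ i $ j / (S j * sD)" for i j
    by (simp add: angle_jac_def S_def sD_def)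
  have row1: "((\<lambda>m. angles_of_sides m $ 1) has_derivative (\<lambda>h. (angle_jac L *v h) $ 1)) (at l)"
    unfolding angles_of_sides_def vector_3
    by (rule has_derivative_eq_rhs[OF hyp_angle_has_derivative[of l 2 3 1, unfolded cosh_l sinh_l,
          OF l(2,3) D]])
      (use sD in \<open>simp add: fun_eq_iff aj gram_adj_def matrix_vector_mult_3 S
          sD_def[symmetric] field_simps\<close>)
  have row2: "((\<lambda>m. angles_of_sides m $ 2) has_derivative (\<lambda>h. (angle_jac L *v h) $ 2)) (at l)"
    unfolding angles_of_sides_def vector_3
    by (rule has_derivative_eq_rhs[OF hyp_angle_has_derivative[of l 3 1 2,
          unfolded cosh_l sinh_l gram_det_cyclic(1)[of "L$2" "L$3" "L$1"], OF l(3,1) D]])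
      (use sD in \<open>simp add: fun_eq_iff aj gram_adj_def matrix_vector_mult_3 S
          sD_def[symmetric] field_simps\<close>)
  have row3: "((\<lambda>m. angles_of_sides m $ 3) has_derivative (\<lambda>h. (angle_jac L *v h) $ 3)) (at l)"
    unfolding angles_of_sides_def vector_3
    by (rule has_derivative_eq_rhs[OF hyp_angle_has_derivative[of l 1 2 3,
          unfolded cosh_l sinh_l gram_det_cyclic(2)[of "L$3" "L$1" "L$2"], OF l(1,2) D]])
      (use sD in \<open>simp add: fun_eq_iff aj gram_adj_def matrix_vector_mult_3 S
          sD_def[symmetric] field_simps\<close>)
  show "((\<lambda>m. angles_of_sides m $ p) has_derivative (\<lambda>h. (angle_jac L *v h) $ p)) (at l)"
    using row1 row2 row3 exhaust_3[of p] by auto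
qed

text \<open>The product \<open>(d\<alpha>/dl)(dl/du)\<close> is negative definite: its quadratic form is the one of
  \<open>angle_form_neg\<close> divided by \<open>sqrt \<Delta>\<close>.\<close>
lemma jacobian_neg_definite:
  fixes L c :: "real^3"
  assumes L: "\<And>i. L$i > 1" and D: "gram_det (L$1) (L$2) (L$3) > 0"
    and K: "L$1*c$2 - c$3 > 0" "L$1*c$3 - c$2 > 0" "L$2*c$1 - c$3 > 0" "L$2*c$3 - c$1 > 0"
      "L$3*c$1 - c$2 > 0" "L$3*c$2 - c$1 > 0"
  shows "neg_definite (angle_jac L ** length_jac L c)"
  unfolding neg_definite_def
proof (intro allI impI)
  fix x :: "real^3"
  assume "x \<noteq> 0"
  then have x: "x$1 \<noteq> 0 \<or> x$2 \<noteq> 0 \<or> x$3 \<noteq> 0"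
    by (metis exhaust_3 vec_eq_iff zero_index)
  define S where "S = (\<lambda>i. sqrt (L$i^2 - 1))"
  define sD where "sD = sqrt (gram_det (L$1) (L$2) (L$3))"
  define z1 where "z1 = ((L$1*c$2 - c$3)*x$2 + (L$1*c$3 - c$2)*x$3)/(L$1^2-1)"
  define z2 where "z2 = ((L$2*c$3 - c$1)*x$3 + (L$2*c$1 - c$3)*x$1)/(L$2^2-1)"
  define z3 where "z3 = ((L$3*c$1 - c$2)*x$1 + (L$3*c$2 - c$1)*x$2)/(L$3^2-1)"
  have S: "S i \<noteq> 0" "(L$i)^2 = 1 + S i * S i" for i
    unfolding S_def by (rule sqrt_sq_minus_one[OF L])+
  have sD: "sD > 0" using D by (simp add: sD_def)
  define w where "w = length_jac L c *v x"
  have sqrt_L: "sqrt (L$i^2 - 1) = S i" for i by (simp add: S_def)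
  have w: "w$1 = S 1 * z1" "w$2 = S 2 * z2" "w$3 = S 3 * z3"
    unfolding w_def z1_def z2_def z3_def
    by (simp_all add: length_jac_def matrix_vector_mult_3 sqrt_L) (simp_all add: S field_simps)
  have "x \<bullet> ((angle_jac L ** length_jac L c) *v x) = x \<bullet> (angle_jac L *v w)"
    by (simp add: w_def matrix_vector_mul_assoc)
  also have "\<dots> = (x$1*((L$1^2-1)*z1 + (L$3-L$1*L$2)*z2 + (L$2-L$1*L$3)*z3)
       + x$2*((L$3-L$1*L$2)*z1 + (L$2^2-1)*z2 + (L$1-L$2*L$3)*z3)
       + x$3*((L$2-L$1*L$3)*z1 + (L$1-L$2*L$3)*z2 + (L$3^2-1)*z3)) / sD"
    by (simp add: inner_vec_def sum_3 matrix_vector_mult_3 w angle_jac_def gram_adj_def sqrt_L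
        sD_def[symmetric]) (use sD in \<open>simp add: S field_simps\<close>)
  also have "\<dots> < 0"
    using angle_form_neg[OF L[of 1] L[of 2] L[of 3] D K x] sD
    unfolding z1_def z2_def z3_def by (simp add: divide_neg_pos)
  finally show "x \<bullet> ((angle_jac L ** length_jac L c) *v x) < 0" .
qed

theorem lemma3p4:
  fixes I12 I23 I31 :: real and u :: "real^3"
  assumes "I12 \<ge> 0" and "I23 \<ge> 0" and "I31 \<ge> 0"
    and "u \<in> U_H I12 I23 I31"
  shows "\<exists>J :: real^3^3. (angles I12 I23 I31 has_derivative (\<lambda>h. J *v h)) (at u)
           \<and> neg_definite J"
proof -
  define l where "l = lengths I12 I23 I31 u"
  define L where "L = (\<chi> i. cosh (l$i))"
  define c where "c = (\<chi> i. cosh (radius (u$i)))"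
  have u: "u$1 < 0" "u$2 < 0" "u$3 < 0" and triangle: "l$1 < l$2 + l$3" "l$2 < l$3 + l$1" "l$3 < l$1 + l$2"
    using assms(4) by (simp_all add: U_H_def l_def Let_def)
  note lc = lengths_pos_and_coeffs[OF assms(1-3) u, folded l_def, folded L_def c_def]
  have L_gt: "L$i > 1" for i using lc(1-3) exhaust_3[of i] by (auto simp: L_def cosh_gt_1)
  have D: "gram_det (L$1) (L$2) (L$3) > 0"
    using gram_det_triangle_pos[OF _ _ _ triangle] lc(1-3) by (simp add: L_def)
  have "(lengths I12 I23 I31 has_derivative (\<lambda>h. length_jac L c *v h)) (at u)"
    using lengths_has_derivative[OF assms(1-3) u, folded l_def, folded L_def c_def] .
  moreover have "(angles_of_sides has_derivative (\<lambda>h. angle_jac L *v h)) (at (lengths I12 I23 I31 u))"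
    using angles_of_sides_has_derivative[OF lc(1-3), folded L_def, OF D] unfolding l_def .
  ultimately have "(angles I12 I23 I31 has_derivative (\<lambda>h. (angle_jac L ** length_jac L c) *v h)) (at u)"
    unfolding angles_eq comp_def matrix_vector_mul_assoc[symmetric] by (rule has_derivative_compose)
  then show ?thesis using jacobian_neg_definite[OF L_gt D lc(4-9)] by blast
qed

end
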